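(* Let $F=\breve F(\alpha_1,\dots,\alpha_t)$ be a fence. (1) If $x,y\in\breve S_i$ for some $i\in[t]$, then $\chi_x-\chi_y\equiv 0$. (2) If $\alpha_i=2$ for all $i\in[t]$, then $\chi\equiv t/2$, where $\chi=\sum_{q\in F}\chi_q$.
   Context: Fences: let $\alpha=(\alpha_1,\dots,\alpha_t)$ be positive integers with $t\ge2$ and $\alpha_1,\alpha_t\ge2$. Put $a_0=0$, $a_i=\alpha_1+\dots+\alpha_i$, $n=a_t-1$. The fence $\breve F(\alpha)$ is the poset on $\{x_1,\dots,x_n\}$ whose cover relations are: for $1\le j\le n-1$ with $a_{i-1}\le j<a_i$, $x_j\lessdot x_{j+1}$ if $i$ is odd and $x_j\gtrdot x_{j+1}$ if $i$ is even. Segments: $S_1=\{x_j:1\le j\le a_1\}$, $S_i=\{x_j:a_{i-1}\le j\le a_i\}$ for $2\le i\le t-1$, $S_t=\{x_j:a_{t-1}\le j\le n\}$. Shared elements are $x_{a_i}$, $i\in[t-1]$; $\breve S_i$ is the set of non-shared elements of $S_i$. $\mathcal J(F)$ is the set of order ideals. For $q\in F$, $I\in\mathcal J(F)$: $\chi_q(I)=1$ if $q\in\max(I)$, else $0$; $T_q(I)=1$ if $q\in\min(F\setminus I)$, $-1$ if $q\in\max(I)$, $0$ otherwise. For functions $f,g:\mathcal J(F)\to\mathbb R$, $f\equiv g$ means $f-g=\sum_{q\in F}c_qT_q$ for some real constants $c_q$; a real number $c$ also denotes the constant function $c$. *)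

theory Defs
  imports Complex_Main
begin

text \<open>A composition alpha = (alpha_1,...,alpha_t) is a list; alpha_i = alpha ! (i-1).
  Fence elements x_1..x_n are represented by the naturals 1..n.\<close>

definition fence_ok :: "nat list \<Rightarrow> bool" where
  "fence_ok alpha \<longleftrightarrow> length alpha \<ge> 2 \<and> (\<forall>k\<in>set alpha. k > 0)
     \<and> hd alpha \<ge> 2 \<and> last alpha \<ge> 2"

definition apart :: "nat list \<Rightarrow> nat \<Rightarrow> nat" where
  "apart alpha i = sum_list (take i alpha)"

definition fsize :: "nat list \<Rightarrow> nat" where
  "fsize alpha = apart alpha (length alpha) - 1"

definition felems :: "nat list \<Rightarrow> nat set" where
  "felems alpha = {1..fsize alpha}"

text \<open>Cover relation: cover alpha u v means x_u is covered by x_v.\<close>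
definition cover :: "nat list \<Rightarrow> nat \<Rightarrow> nat \<Rightarrow> bool" where
  "cover alpha u v \<longleftrightarrow>
     (\<exists>j i. 1 \<le> j \<and> j \<le> fsize alpha - 1 \<and> 1 \<le> i \<and> i \<le> length alpha
        \<and> apart alpha (i-1) \<le> j \<and> j < apart alpha i
        \<and> (if odd i then u = j \<and> v = j + 1 else u = j + 1 \<and> v = j))"

definition fle :: "nat list \<Rightarrow> nat \<Rightarrow> nat \<Rightarrow> bool" where
  "fle alpha = (cover alpha)\<^sup>*\<^sup>*"

definition fless :: "nat list \<Rightarrow> nat \<Rightarrow> nat \<Rightarrow> bool" where
  "fless alpha u v \<longleftrightarrow> fle alpha u v \<and> u \<noteq> v"

definition ideals :: "nat list \<Rightarrow> nat set set" where
  "ideals alpha = {I. I \<subseteq> felems alpha \<and>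
      (\<forall>u v. v \<in> I \<longrightarrow> u \<in> felems alpha \<longrightarrow> fle alpha u v \<longrightarrow> u \<in> I)}"

definition maxs :: "nat list \<Rightarrow> nat set \<Rightarrow> nat set" where
  "maxs alpha A = {q \<in> A. \<not> (\<exists>r\<in>A. fless alpha q r)}"

definition mins :: "nat list \<Rightarrow> nat set \<Rightarrow> nat set" where
  "mins alpha A = {q \<in> A. \<not> (\<exists>r\<in>A. fless alpha r q)}"

definition chi :: "nat list \<Rightarrow> nat \<Rightarrow> nat set \<Rightarrow> real" where
  "chi alpha q I = (if q \<in> maxs alpha I then 1 else 0)"

definition toggle :: "nat list \<Rightarrow> nat \<Rightarrow> nat set \<Rightarrow> real" where
  "toggle alpha q I = (if q \<in> mins alpha (felems alpha - I) then 1
                       else if q \<in> maxs alpha I then -1 else 0)"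

definition tequiv :: "nat list \<Rightarrow> (nat set \<Rightarrow> real) \<Rightarrow> (nat set \<Rightarrow> real) \<Rightarrow> bool" where
  "tequiv alpha f g \<longleftrightarrow> (\<exists>c :: nat \<Rightarrow> real. \<forall>I\<in>ideals alpha.
      f I - g I = (\<Sum>q\<in>felems alpha. c q * toggle alpha q I))"

definition segment :: "nat list \<Rightarrow> nat \<Rightarrow> nat set" where
  "segment alpha i =
     (if i = 1 then {1..apart alpha 1}
      else if i = length alpha then {apart alpha (length alpha - 1)..fsize alpha}
      else {apart alpha (i-1)..apart alpha i})"

definition shared :: "nat list \<Rightarrow> nat set" where
  "shared alpha = apart alpha ` {1..length alpha - 1}"

definition bsegment :: "nat list \<Rightarrow> nat \<Rightarrow> nat set" where
  "bsegment alpha i = segment alpha i - shared alpha"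

end

theory Submission
  imports Defs
begin

text \<open>
  If y is the only upper cover of x and x the only lower cover of y, then
  chi_x - chi_y = T_y on every order ideal. Consecutive non-shared elements of a segment
  form such a pair, and chaining these identities along the segment gives (1).

  For (2), with all alpha_i = 2 the segments are the chains x_(2k-2), x_(2k-1), x_(2k)
  (up for odd k, down for even k), so the peaks are the x_q with q mod 4 = 2 and the
  valleys those with q mod 4 = 0. Take c_q = -1/2 for odd q, -1 on valleys and 0 on peaks.
  Then w_q = chi_q - c_q T_q is [q in I] on a peak, [q notin I] on a valley and
  (chi_q + [q in min(F - I)]) / 2 on the middle element of a segment; since a chain meets
  an ideal in a down-set, the latter equals (1 - w_low - w_high) / 2. Hence
  w_(2k) + w_(2k+1) = 1/2 + (w_(2k) - w_(2k+2)) / 2, and the sum of all w_q telescopes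
  to t/2 because w vanishes at the virtual end points 0 and 2t.
\<close>

lemma cover_felems:
  assumes "cover alpha u v"
  shows "u \<in> felems alpha" "v \<in> felems alpha" "u \<noteq> v"
  using assms unfolding cover_def felems_def by (auto split: if_splits)

lemma ideals_subset_felems: "I \<in> ideals alpha \<Longrightarrow> I \<subseteq> felems alpha"
  unfolding ideals_def by blast

lemma ideal_cover_closed:
  assumes "I \<in> ideals alpha" "cover alpha u v" "v \<in> I"
  shows "u \<in> I"
  using assms cover_felems[OF assms(2)] unfolding ideals_def fle_def by blast

lemma maxs_ideal_iff:
  assumes I: "I \<in> ideals alpha"
  shows "q \<in> maxs alpha I \<longleftrightarrow> q \<in> I \<and> (\<forall>v. cover alpha q v \<longrightarrow> v \<notin> I)"
proof
  assume "q \<in> maxs alpha I"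
  then show "q \<in> I \<and> (\<forall>v. cover alpha q v \<longrightarrow> v \<notin> I)"
    unfolding maxs_def fless_def fle_def using cover_felems(3) by blast
next
  assume q: "q \<in> I \<and> (\<forall>v. cover alpha q v \<longrightarrow> v \<notin> I)"
  have False if "r \<in> I" "(cover alpha)\<^sup>*\<^sup>* q r" "q \<noteq> r" for r
  proof -
    from that(2,3) obtain v where v: "cover alpha q v" "(cover alpha)\<^sup>*\<^sup>* v r"
      by (metis converse_rtranclpE)
    have "v \<in> I"
      using I that(1) v cover_felems(2)[OF v(1)] unfolding ideals_def fle_def by blast
    with q v(1) show False by blast
  qed
  with q show "q \<in> maxs alpha I"
    unfolding maxs_def fless_def fle_def by blast
qed

lemma mins_compl_ideal_iff:
  assumes I: "I \<in> ideals alpha"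
  shows "q \<in> mins alpha (felems alpha - I) \<longleftrightarrow>
    q \<in> felems alpha - I \<and> (\<forall>u. cover alpha u q \<longrightarrow> u \<in> I)"
proof
  assume "q \<in> mins alpha (felems alpha - I)"
  then show "q \<in> felems alpha - I \<and> (\<forall>u. cover alpha u q \<longrightarrow> u \<in> I)"
    unfolding mins_def fless_def fle_def using cover_felems by blast
next
  assume q: "q \<in> felems alpha - I \<and> (\<forall>u. cover alpha u q \<longrightarrow> u \<in> I)"
  have False if "r \<in> felems alpha - I" "(cover alpha)\<^sup>*\<^sup>* r q" "r \<noteq> q" for r
  proof -
    from that(2,3) obtain u where u: "(cover alpha)\<^sup>*\<^sup>* r u" "cover alpha u q"
      by (metis rtranclp.cases)
    have "u \<in> I" using q u(2) by blast
    then have "r \<in> I"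
      using I that(1) u(1) unfolding ideals_def fle_def by blast
    with that(1) show False by blast
  qed
  with q show "q \<in> mins alpha (felems alpha - I)"
    unfolding mins_def fless_def fle_def by blast
qed

definition chi_min :: "nat list \<Rightarrow> nat \<Rightarrow> nat set \<Rightarrow> real" where
  "chi_min alpha q I = (if q \<in> mins alpha (felems alpha - I) then 1 else 0)"

lemma toggle_eq_chi_min_minus_chi: "toggle alpha q I = chi_min alpha q I - chi alpha q I"
  unfolding toggle_def chi_min_def chi_def maxs_def mins_def by auto

lemma chi_ideal_eq:
  "I \<in> ideals alpha \<Longrightarrow>
    chi alpha q I = (if q \<in> I \<and> (\<forall>v. cover alpha q v \<longrightarrow> v \<notin> I) then 1 else 0)"
  unfolding chi_def by (simp only: maxs_ideal_iff)

lemma chi_min_ideal_eq: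
  "I \<in> ideals alpha \<Longrightarrow>
    chi_min alpha q I = (if q \<in> felems alpha - I \<and> (\<forall>u. cover alpha u q \<longrightarrow> u \<in> I) then 1 else 0)"
  unfolding chi_min_def by (simp only: mins_compl_ideal_iff)

lemma chi_diff_eq_toggle_if_unique_cover:
  assumes I: "I \<in> ideals alpha" and uv: "cover alpha u v"
    and up: "\<And>w. cover alpha u w \<Longrightarrow> w = v" and down: "\<And>w. cover alpha w v \<Longrightarrow> w = u"
  shows "chi alpha u I - chi alpha v I = toggle alpha v I"
proof -
  have "(\<forall>w. cover alpha u w \<longrightarrow> w \<notin> I) \<longleftrightarrow> v \<notin> I" using uv up by blast
  moreover have "(\<forall>w. cover alpha w v \<longrightarrow> w \<in> I) \<longleftrightarrow> u \<in> I" using uv down by blast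
  ultimately show ?thesis
    unfolding toggle_eq_chi_min_minus_chi chi_ideal_eq[OF I] chi_min_ideal_eq[OF I]
    using cover_felems(2)[OF uv] ideal_cover_closed[OF I uv] by auto
qed

lemma tequiv_refl: "tequiv alpha f f"
  unfolding tequiv_def by (rule exI[of _ "\<lambda>_. 0"]) simp

lemma tequiv_sym:
  assumes "tequiv alpha f g"
  shows "tequiv alpha g f"
proof -
  from assms obtain c where
    c: "\<forall>I\<in>ideals alpha. f I - g I = (\<Sum>q\<in>felems alpha. c q * toggle alpha q I)"
    unfolding tequiv_def by blast
  show ?thesis
    unfolding tequiv_def
  proof (intro exI[of _ "\<lambda>q. - c q"] ballI)
    fix I assume "I \<in> ideals alpha"
    with c have "f I - g I = (\<Sum>q\<in>felems alpha. c q * toggle alpha q I)" by blast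
    then show "g I - f I = (\<Sum>q\<in>felems alpha. - c q * toggle alpha q I)"
      by (simp add: sum_negf)
  qed
qed

lemma tequiv_trans:
  assumes "tequiv alpha f g" "tequiv alpha g h"
  shows "tequiv alpha f h"
proof -
  from assms obtain c d where
    c: "\<forall>I\<in>ideals alpha. f I - g I = (\<Sum>q\<in>felems alpha. c q * toggle alpha q I)" and
    d: "\<forall>I\<in>ideals alpha. g I - h I = (\<Sum>q\<in>felems alpha. d q * toggle alpha q I)"
    unfolding tequiv_def by blast
  show ?thesis
    unfolding tequiv_def
  proof (intro exI[of _ "\<lambda>q. c q + d q"] ballI)
    fix I assume I: "I \<in> ideals alpha"
    have "f I - h I = (f I - g I) + (g I - h I)" by simp
    with c d I show "f I - h I = (\<Sum>q\<in>felems alpha. (c q + d q) * toggle alpha q I)"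
      by (simp add: distrib_right sum.distrib)
  qed
qed

lemma tequiv_diff_zero_iff:
  "tequiv alpha (\<lambda>I. f I - g I) (\<lambda>_. 0) \<longleftrightarrow> tequiv alpha f g"
  unfolding tequiv_def by simp

lemma tequiv_by_toggle:
  assumes "q \<in> felems alpha" "\<And>I. I \<in> ideals alpha \<Longrightarrow> f I - g I = a * toggle alpha q I"
  shows "tequiv alpha f g"
  unfolding tequiv_def
proof (intro exI[of _ "\<lambda>r. if r = q then a else 0"] ballI)
  fix I assume "I \<in> ideals alpha"
  with assms have "f I - g I = (\<Sum>r\<in>felems alpha. if r = q then a * toggle alpha r I else 0)"
    by (simp add: felems_def)
  also have "\<dots> = (\<Sum>r\<in>felems alpha. (if r = q then a else 0) * toggle alpha r I)"
    by (rule sum.cong) auto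
  finally show "f I - g I = (\<Sum>r\<in>felems alpha. (if r = q then a else 0) * toggle alpha r I)" .
qed

lemma apart_0 [simp]: "apart alpha 0 = 0"
  unfolding apart_def by simp

lemma apart_mono:
  assumes "i \<le> i'"
  shows "apart alpha i \<le> apart alpha i'"
proof -
  from assms obtain d where "i' = i + d" using le_Suc_ex by blast
  then show ?thesis unfolding apart_def by (simp add: take_add)
qed

lemma apart_interval_unique:
  assumes "apart alpha (i - 1) \<le> k" "k < apart alpha i"
    and "apart alpha (i' - 1) \<le> k" "k < apart alpha i'"
    and "1 \<le> i" "1 \<le> i'"
  shows "i = i'"
proof (rule ccontr)
  assume "i \<noteq> i'"
  then have "i \<le> i' - 1 \<or> i' \<le> i - 1" using assms(5,6) by linarith
  then show False
    using apart_mono[of i "i' - 1" alpha] apart_mono[of i' "i - 1" alpha] assms(1-4) by linarith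
qed

lemma fence_ok_apart_length:
  assumes "fence_ok alpha"
  shows "apart alpha 1 \<ge> 2" "apart alpha (length alpha) = Suc (fsize alpha)"
proof -
  show "apart alpha 1 \<ge> 2"
    using assms unfolding fence_ok_def apart_def by (cases alpha) auto
  moreover have "apart alpha 1 \<le> apart alpha (length alpha)"
    using assms unfolding fence_ok_def by (intro apart_mono) simp
  ultimately show "apart alpha (length alpha) = Suc (fsize alpha)"
    unfolding fsize_def by simp
qed

lemma bsegment_eq:
  assumes f: "fence_ok alpha" and i: "1 \<le> i" "i \<le> length alpha"
  shows "bsegment alpha i = {apart alpha (i - 1)<..<apart alpha i}"
proof -
  let ?A = "apart alpha (i - 1)" and ?B = "apart alpha i"
  have t: "length alpha \<ge> 2" using f unfolding fence_ok_def by simp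
  note ends = fence_ok_apart_length[OF f]
  have lower: "apart alpha 1 \<le> ?A" if "i \<noteq> 1"
    using that i by (intro apart_mono) linarith
  have upper: "?B \<le> apart alpha (length alpha)"
    using i by (intro apart_mono) simp
  have seg: "{?A<..<?B} \<subseteq> segment alpha i" "segment alpha i \<subseteq> {?A..?B}"
    using i t ends lower upper unfolding segment_def by auto
  have "?A \<notin> segment alpha i - shared alpha"
  proof (cases "i = 1")
    case False
    with i have "i - 1 \<in> {1..length alpha - 1}" by auto
    then show ?thesis unfolding shared_def by blast
  qed (simp add: segment_def)
  moreover have "?B \<notin> segment alpha i - shared alpha"
  proof (cases "i = length alpha")
    case True
    with t ends show ?thesis unfolding segment_def by auto
  next
    case False
    with i have "i \<in> {1..length alpha - 1}" by auto
    then show ?thesis unfolding shared_def by blast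
  qed
  moreover have "apart alpha m \<notin> {?A<..<?B}" for m
    using apart_mono[of m "i - 1" alpha] apart_mono[of i m alpha]
    by (cases "m < i") (simp_all, linarith)
  then have "shared alpha \<inter> {?A<..<?B} = {}"
    unfolding shared_def by blast
  ultimately show ?thesis
    using seg unfolding bsegment_def by fastforce
qed

lemma cover_cases:
  assumes "cover alpha u v"
  obtains k i where "1 \<le> i" "apart alpha (i - 1) \<le> k" "k < apart alpha i"
    "if odd i then u = k \<and> v = Suc k else u = Suc k \<and> v = k"
  using assms unfolding cover_def by auto

lemma cover_direction_bsegment:
  assumes f: "fence_ok alpha" and i: "1 \<le> i" "i \<le> length alpha"
    and j: "j \<in> bsegment alpha i" and uv: "cover alpha u v" "j = u \<or> j = v"
  shows "if odd i then v = Suc u else u = Suc v"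
proof -
  obtain k i' where k: "1 \<le> i'" "apart alpha (i' - 1) \<le> k" "k < apart alpha i'"
    and dir: "if odd i' then u = k \<and> v = Suc k else u = Suc k \<and> v = k"
    using cover_cases[OF uv(1)] by blast
  from dir uv(2) have "j = k \<or> j = Suc k" by (auto split: if_splits)
  with j have "apart alpha (i - 1) \<le> k" "k < apart alpha i"
    unfolding bsegment_eq[OF f i] by auto
  with k i have "i' = i" using apart_interval_unique by blast
  with dir show ?thesis by auto
qed

lemma cover_Suc_bsegment:
  assumes f: "fence_ok alpha" and i: "1 \<le> i" "i \<le> length alpha"
    and j: "j \<in> bsegment alpha i" "Suc j \<in> bsegment alpha i"
  shows "if odd i then cover alpha j (Suc j) else cover alpha (Suc j) j"
proof -
  have "Suc j < apart alpha (length alpha)"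
    using j(2) apart_mono[OF i(2), of alpha] unfolding bsegment_eq[OF f i] by auto
  then have "1 \<le> j" "j \<le> fsize alpha - 1" "apart alpha (i - 1) \<le> j" "j < apart alpha i"
    using j fence_ok_apart_length(2)[OF f] unfolding bsegment_eq[OF f i] by auto
  with i show ?thesis unfolding cover_def by auto
qed

lemma tequiv_chi_Suc_bsegment:
  assumes f: "fence_ok alpha" and i: "1 \<le> i" "i \<le> length alpha"
    and j: "j \<in> bsegment alpha i" "Suc j \<in> bsegment alpha i"
  shows "tequiv alpha (chi alpha j) (chi alpha (Suc j))"
proof (cases "odd i")
  case True
  then have c: "cover alpha j (Suc j)" using cover_Suc_bsegment[OF assms] by simp
  have "w = Suc j" if "cover alpha j w" for w
    using cover_direction_bsegment[OF f i j(1) that] True by simp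
  moreover have "w = j" if "cover alpha w (Suc j)" for w
    using cover_direction_bsegment[OF f i j(2) that] True by simp
  ultimately have "chi alpha j I - chi alpha (Suc j) I = 1 * toggle alpha (Suc j) I"
    if "I \<in> ideals alpha" for I
    using chi_diff_eq_toggle_if_unique_cover[OF that c] by simp
  with cover_felems(2)[OF c] show ?thesis by (intro tequiv_by_toggle)
next
  case False
  then have c: "cover alpha (Suc j) j" using cover_Suc_bsegment[OF assms] by simp
  have "w = j" if "cover alpha (Suc j) w" for w
    using cover_direction_bsegment[OF f i j(2) that] False by simp
  moreover have "w = Suc j" if "cover alpha w j" for w
    using cover_direction_bsegment[OF f i j(1) that] False by simp
  ultimately have "chi alpha j I - chi alpha (Suc j) I = -1 * toggle alpha j I"
    if "I \<in> ideals alpha" for I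
    using chi_diff_eq_toggle_if_unique_cover[OF that c] by simp
  with cover_felems(2)[OF c] show ?thesis by (intro tequiv_by_toggle)
qed

lemma tequiv_chi_bsegment:
  assumes f: "fence_ok alpha" and i: "1 \<le> i" "i \<le> length alpha"
    and x: "x \<in> bsegment alpha i" and y: "y \<in> bsegment alpha i"
  shows "tequiv alpha (chi alpha x) (chi alpha y)"
proof -
  have ascending: "tequiv alpha (chi alpha x) (chi alpha y)"
    if "x \<le> y" "x \<in> bsegment alpha i" "y \<in> bsegment alpha i" for x y
    using that(1)
  proof (induction y rule: dec_induct)
    case base
    show ?case by (rule tequiv_refl)
  next
    case (step n)
    with that(2,3) have "n \<in> bsegment alpha i" "Suc n \<in> bsegment alpha i"
      unfolding bsegment_eq[OF f i] by auto
    from tequiv_trans[OF step.IH tequiv_chi_Suc_bsegment[OF f i this]] show ?case .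
  qed
  show ?thesis
  proof (cases "x \<le> y")
    case True
    from ascending[OF True x y] show ?thesis .
  next
    case False
    then have "y \<le> x" by simp
    from tequiv_sym[OF ascending[OF this y x]] show ?thesis .
  qed
qed

abbreviation twos :: "nat \<Rightarrow> nat list" where "twos t \<equiv> replicate t 2"

lemma apart_replicate: "apart (replicate t c) i = c * min i t"
  unfolding apart_def by (simp add: sum_list_replicate)

lemma felems_twos: "felems (twos t) = {1..2 * t - 1}"
  unfolding felems_def fsize_def apart_replicate by simp

text \<open>The fence x_1 < x_2 > x_3 > x_4 < x_5 < x_6 > ... : peaks are 2 mod 4, valleys 0 mod 4.\<close>

lemma cover_twos:
  "cover (twos t) u v \<longleftrightarrow>
    u \<in> felems (twos t) \<and> v \<in> felems (twos t) \<and>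
    (Suc u = v \<or> u = Suc v) \<and> (v mod 4 = 2 \<or> u mod 4 = 0)"
    (is "_ \<longleftrightarrow> ?rhs")
proof
  assume "cover (twos t) u v"
  then obtain j i where j: "1 \<le> j" "j \<le> 2 * t - 2" and i: "2 * (i - 1) \<le> j" "j < 2 * i"
    and dir: "if odd i then u = j \<and> v = Suc j else u = Suc j \<and> v = j"
    unfolding cover_def fsize_def apart_replicate by auto
  from i have odd_iff: "odd i \<longleftrightarrow> j mod 4 < 2" by presburger
  have "j mod 4 < 2 \<and> u = j \<and> v = Suc j \<or> \<not> j mod 4 < 2 \<and> u = Suc j \<and> v = j"
    using dir unfolding odd_iff by (simp split: if_splits)
  moreover from this have "v mod 4 = 2 \<or> u mod 4 = 0" by (elim disjE conjE; simp; presburger)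
  ultimately show ?rhs using j unfolding felems_twos by auto
next
  assume rhs: ?rhs
  define j where "j = min u v"
  from rhs have j: "1 \<le> j" "j \<le> 2 * t - 2"
    unfolding j_def felems_twos by auto
  have i: "2 * (j div 2 + 1 - 1) \<le> j" "j < 2 * (j div 2 + 1)" "j div 2 + 1 \<le> t"
    using j by presburger+
  from rhs have "if odd (j div 2 + 1) then u = j \<and> v = Suc j else u = Suc j \<and> v = j"
    unfolding j_def by (auto simp: min_def) presburger+
  with j i show "cover (twos t) u v"
    unfolding cover_def fsize_def apart_replicate length_replicate
    by (intro exI[of _ j] exI[of _ "j div 2 + 1"]) simp
qed

lemma chi_twos_peak:
  assumes "I \<in> ideals (twos t)" "p mod 4 = 2"
  shows "chi (twos t) p I = (if p \<in> I then 1 else 0)"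
proof -
  have "\<not> cover (twos t) p v" for v
    using assms(2) unfolding cover_twos by (auto; presburger)
  then show ?thesis unfolding chi_ideal_eq[OF assms(1)] by simp
qed

lemma chi_min_twos_valley:
  assumes "I \<in> ideals (twos t)" "q mod 4 = 0"
  shows "chi_min (twos t) q I = (if q \<in> felems (twos t) - I then 1 else 0)"
proof -
  have "\<not> cover (twos t) u q" for u
    using assms(2) unfolding cover_twos by (auto; presburger)
  then show ?thesis unfolding chi_min_ideal_eq[OF assms(1)] by simp
qed

lemma adjacent_eq_if_mod_4_eq:
  fixes a b m :: nat
  assumes "Suc a = m \<or> a = Suc m" "Suc b = m \<or> b = Suc m" "a mod 4 = b mod 4"
  shows "a = b"
proof -
  have "c mod 4 \<noteq> (c + 2) mod 4" "(c + 2) mod 4 \<noteq> c mod 4" for c :: nat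
    by (simp_all add: mod_Suc)
  with assms show ?thesis by auto
qed

lemma chi_add_chi_min_twos_odd:
  assumes I: "I \<in> ideals (twos t)" and m: "odd m" "m \<in> felems (twos t)"
    and h: "h mod 4 = 2" "Suc h = m \<or> h = Suc m"
    and l: "l mod 4 = 0" "Suc l = m \<or> l = Suc m"
  shows "chi (twos t) m I + chi_min (twos t) m I
    = 1 - (if h \<in> I then 1 else 0) - (if l \<in> felems (twos t) - I then 1 else 0)"
proof -
  from m(1) have "m mod 4 \<noteq> 0" "m mod 4 \<noteq> 2" by presburger+
  then have up: "cover (twos t) m v \<longleftrightarrow> v = h \<and> h \<in> felems (twos t)" for v
    using m h adjacent_eq_if_mod_4_eq[of v m h] unfolding cover_twos by auto
  have down: "cover (twos t) u m \<longleftrightarrow> u = l \<and> l \<in> felems (twos t)" for u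
    using m l adjacent_eq_if_mod_4_eq[of u m l] \<open>m mod 4 \<noteq> 2\<close> unfolding cover_twos by auto
  note sub = ideals_subset_felems[OF I]
  have chi_m: "chi (twos t) m I = (if m \<in> I \<and> h \<notin> I then 1 else 0)"
    unfolding chi_ideal_eq[OF I] up using sub by auto
  have chi_min_m: "chi_min (twos t) m I
      = (if m \<notin> I \<and> (l \<in> felems (twos t) \<longrightarrow> l \<in> I) then 1 else 0)"
    unfolding chi_min_ideal_eq[OF I] down using m(2) by auto
  have "h \<in> I \<Longrightarrow> m \<in> I"
    using ideal_cover_closed[OF I, of m h] up[of h] sub by blast
  moreover have "m \<in> I \<Longrightarrow> l \<in> felems (twos t) \<Longrightarrow> l \<in> I"
    using ideal_cover_closed[OF I, of l m] down[of l] by blast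
  ultimately show ?thesis
    unfolding chi_m chi_min_m by (cases "h \<in> I"; cases "m \<in> I"; cases "l \<in> I") auto
qed

definition twos_coeff :: "nat \<Rightarrow> real" where
  "twos_coeff q = (if odd q then - 1 / 2 else if q mod 4 = 0 then - 1 else 0)"

definition twos_weight :: "nat \<Rightarrow> nat \<Rightarrow> nat set \<Rightarrow> real" where
  "twos_weight t q I = chi (twos t) q I - twos_coeff q * toggle (twos t) q I"

lemma twos_weight_even:
  assumes I: "I \<in> ideals (twos t)" and "even e"
  shows "twos_weight t e I =
    (if e mod 4 = 2 then (if e \<in> I then 1 else 0) else (if e \<in> felems (twos t) - I then 1 else 0))"
proof (cases "e mod 4 = 2")
  case True
  then show ?thesis
    unfolding twos_weight_def twos_coeff_def using \<open>even e\<close> chi_twos_peak[OF I True] by simp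
next
  case False
  with \<open>even e\<close> have "e mod 4 = 0" by presburger
  then show ?thesis
    unfolding twos_weight_def twos_coeff_def toggle_eq_chi_min_minus_chi
    using \<open>even e\<close> chi_min_twos_valley[OF I] by simp
qed

lemma twos_weight_odd:
  assumes I: "I \<in> ideals (twos t)" and k: "k < t"
  shows "twos_weight t (2 * k + 1) I = (1 - twos_weight t (2 * k) I - twos_weight t (2 * k + 2) I) / 2"
proof -
  obtain h l where hl: "{h, l} = {2 * k, 2 * k + 2}" "h mod 4 = 2" "l mod 4 = 0"
  proof (cases "even k")
    case True
    then have "(2 * k + 2) mod 4 = 2" "2 * k mod 4 = 0" by presburger+
    then show ?thesis by (intro that[of "2 * k + 2" "2 * k"]) auto
  next
    case False
    then have "2 * k mod 4 = 2" "(2 * k + 2) mod 4 = 0" by presburger+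
    then show ?thesis by (intro that[of "2 * k" "2 * k + 2"]) auto
  qed
  from hl(2,3) have "even h" "even l" by presburger+
  have "twos_weight t (2 * k + 1) I
      = (chi (twos t) (2 * k + 1) I + chi_min (twos t) (2 * k + 1) I) / 2"
    unfolding twos_weight_def twos_coeff_def toggle_eq_chi_min_minus_chi by (simp add: field_simps)
  moreover have "chi (twos t) (2 * k + 1) I + chi_min (twos t) (2 * k + 1) I
      = 1 - (if h \<in> I then 1 else 0) - (if l \<in> felems (twos t) - I then 1 else 0)"
    using hl k by (intro chi_add_chi_min_twos_odd[OF I])
      (auto simp: felems_twos doubleton_eq_iff)
  moreover have "(if h \<in> I then 1 else 0) = twos_weight t h I"
    "(if l \<in> felems (twos t) - I then 1 else 0) = twos_weight t l I"
    using hl(2,3) \<open>even h\<close> \<open>even l\<close> twos_weight_even[OF I] by simp_all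
  moreover have "twos_weight t h I + twos_weight t l I
      = twos_weight t (2 * k) I + twos_weight t (2 * k + 2) I"
    using hl(1) by (auto simp: doubleton_eq_iff)
  ultimately show ?thesis by simp
qed

lemma sum_lessThan_double_pairs:
  fixes g :: "nat \<Rightarrow> 'a::comm_monoid_add"
  shows "(\<Sum>q<2 * t. g q) = (\<Sum>k<t. g (2 * k) + g (2 * k + 1))"
  by (induction t) (simp_all add: add.assoc)

lemma sum_twos_weight:
  assumes I: "I \<in> ideals (twos t)"
  shows "(\<Sum>q\<in>felems (twos t). twos_weight t q I) = real t / 2"
proof -
  note sub = ideals_subset_felems[OF I]
  have "0 \<notin> felems (twos t)" "2 * t \<notin> felems (twos t)"
    unfolding felems_twos by auto
  with sub have ends: "twos_weight t 0 I = 0" "twos_weight t (2 * t) I = 0"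
    using twos_weight_even[OF I] by auto
  have "(\<Sum>q\<in>felems (twos t). twos_weight t q I) = (\<Sum>q<2 * t. twos_weight t q I)"
    using ends(1) unfolding felems_twos
    by (intro sum.mono_neutral_left) (auto simp: not_less_eq_eq)
  also have "\<dots> = (\<Sum>k<t. 1 / 2 + (twos_weight t (2 * k) I - twos_weight t (2 * Suc k) I) / 2)"
    unfolding sum_lessThan_double_pairs
  proof (rule sum.cong[OF refl])
    fix k assume "k \<in> {..<t}"
    with twos_weight_odd[OF I, of k] show "twos_weight t (2 * k) I + twos_weight t (2 * k + 1) I
        = 1 / 2 + (twos_weight t (2 * k) I - twos_weight t (2 * Suc k) I) / 2"
      by (simp add: field_simps)
  qed
  also have "\<dots> = real t / 2 + (\<Sum>k<t. twos_weight t (2 * k) I - twos_weight t (2 * Suc k) I) / 2"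
    by (simp add: sum.distrib sum_divide_distrib)
  also have "(\<Sum>k<t. twos_weight t (2 * k) I - twos_weight t (2 * Suc k) I)
      = twos_weight t 0 I - twos_weight t (2 * t) I"
    using sum_lessThan_telescope'[of "\<lambda>k. twos_weight t (2 * k) I" t] by simp
  finally show ?thesis using ends by simp
qed

lemma tequiv_sum_chi_twos:
  "tequiv (twos t) (\<lambda>I. \<Sum>q\<in>felems (twos t). chi (twos t) q I) (\<lambda>_. real t / 2)"
  unfolding tequiv_def
proof (intro exI[of _ twos_coeff] ballI)
  fix I assume "I \<in> ideals (twos t)"
  then have "(\<Sum>q\<in>felems (twos t). chi (twos t) q I)
      - (\<Sum>q\<in>felems (twos t). twos_coeff q * toggle (twos t) q I) = real t / 2"
    using sum_twos_weight unfolding twos_weight_def by (simp add: sum_subtractf)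
  then show "(\<Sum>q\<in>felems (twos t). chi (twos t) q I) - real t / 2
      = (\<Sum>q\<in>felems (twos t). twos_coeff q * toggle (twos t) q I)" by linarith
qed

theorem corollary3p2:
  fixes alpha :: "nat list"
  assumes "fence_ok alpha"
  shows "(\<forall>i\<in>{1..length alpha}. \<forall>x\<in>bsegment alpha i. \<forall>y\<in>bsegment alpha i.
            tequiv alpha (\<lambda>I. chi alpha x I - chi alpha y I) (\<lambda>_. 0))
       \<and> ((\<forall>k\<in>set alpha. k = 2) \<longrightarrow>
            tequiv alpha (\<lambda>I. \<Sum>q\<in>felems alpha. chi alpha q I)
                         (\<lambda>_. real (length alpha) / 2))"
proof (intro conjI ballI impI)
  fix i x y assume "i \<in> {1..length alpha}" "x \<in> bsegment alpha i" "y \<in> bsegment alpha i"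
  then show "tequiv alpha (\<lambda>I. chi alpha x I - chi alpha y I) (\<lambda>_. 0)"
    unfolding tequiv_diff_zero_iff by (auto intro: tequiv_chi_bsegment[OF assms])
next
  assume "\<forall>k\<in>set alpha. k = 2"
  define t where "t = length alpha"
  with \<open>\<forall>k\<in>set alpha. k = 2\<close> have "alpha = twos t" by (simp add: replicate_length_same)
  with tequiv_sum_chi_twos[of t]
  show "tequiv alpha (\<lambda>I. \<Sum>q\<in>felems alpha. chi alpha q I) (\<lambda>_. real (length alpha) / 2)"
    by simp
qed

end
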